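(* Let $a,b,c\ge 0$ be integers with $a+c\ge 1$, $b+c\ge 1$, and $a+b+c\le D$. Let $I_a,I_b,I_c\subseteq\{1,\dots,D\}$ be pairwise disjoint with $|I_a|=a$, $|I_b|=b$, $|I_c|=c$. Define $u,v\in\mathbb{R}^D$ by $u_i=\frac{1}{a+c}$ for $i\in I_a\cup I_c$ and $u_i=0$ otherwise, and $v_i=\frac{1}{b+c}$ for $i\in I_b\cup I_c$ and $v_i=0$ otherwise. Let $r_1,\dots,r_D$ be i.i.d. standard Cauchy random variables (density $\frac{1}{\pi(1+r^2)}$), and $x=\sum_i u_ir_i$, $y=\sum_i v_ir_i$. Then $$\Pr\big(\mathrm{sign}(x)\neq\mathrm{sign}(y)\big)=\frac{1}{2}-\frac{2}{\pi^2}E\left\{\tan^{-1}\!\left(\frac{c}{a}|R|\right)\tan^{-1}\!\left(\frac{c}{b}|R|\right)\right\},$$ where $R$ is a standard Cauchy random variable, with the convention that $\tan^{-1}\!\left(\frac{c}{0}|R|\right)=\frac{\pi}{2}$ when $c>0$ (note $R\neq0$ a.s.).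
   Context: $\tan^{-1}$ is the principal arctangent. In this setting $\rho_{\chi^2}=\sum_i\frac{2u_iv_i}{u_i+v_i}=\frac{2c}{a+b+2c}$. *)

theory Defs
  imports "HOL-Probability.Probability"
begin

definition cauchy_density :: "real \<Rightarrow> real" where
  "cauchy_density r = 1 / (pi * (1 + r\<^sup>2))"

definition cauchy_measure :: "real measure" where
  "cauchy_measure = density lborel (\<lambda>r. ennreal (cauchy_density r))"

text \<open>tan^{-1}((c/a) t), with the paper's convention that it equals pi/2 when a = 0
  (used only when c > 0).\<close>
definition atan_ratio :: "nat \<Rightarrow> nat \<Rightarrow> real \<Rightarrow> real" where
  "atan_ratio c a t = (if a = 0 then pi / 2 else arctan (real c / real a * t))"

end

theory Submission
  imports Defs "HOL-Real_Asymp.Real_Asymp"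
begin

text \<open>Sums of independent standard Cauchy variables are again Cauchy, with scale equal to the
  number of summands: the densities \<open>s / (\<pi> (s\<^sup>2 + x\<^sup>2))\<close> form a convolution semigroup.
  Both \<open>x\<close> and \<open>y\<close> are positive multiples of \<open>X + Z\<close> and \<open>Y + Z\<close>, where \<open>X, Y, Z\<close> are the
  independent sums over \<open>I\<^sub>a, I\<^sub>b, I\<^sub>c\<close> and \<open>X + Z, Y + Z\<close> vanish with probability zero. Hence
  the probability of a sign disagreement is \<open>1/2 - E[sgn (X + Z) sgn (Y + Z)] / 2\<close>. Conditioning
  on \<open>Z = z\<close> factors the expectation, and \<open>E[sgn (X + z)] = (2/\<pi>) arctan (z/a)\<close> for
  \<open>X\<close> Cauchy of scale \<open>a > 0\<close>. Finally \<open>Z\<close> has the law of \<open>c R\<close> with \<open>R\<close> standard Cauchy.\<close>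

lemma lborel_integral_FTC_nonneg:
  fixes f F :: "real \<Rightarrow> real"
  assumes F: "\<And>x. DERIV F x :> f x" and f: "\<And>x. isCont f x" and nonneg: "\<And>x. 0 \<le> f x"
    and A: "(F \<longlongrightarrow> A) at_bot" and B: "(F \<longlongrightarrow> B) at_top"
  shows "integrable lborel f" "integral\<^sup>L lborel f = B - A"
    "(\<integral>\<^sup>+x. ennreal (f x) \<partial>lborel) = ennreal (B - A)"
proof -
  have int: "set_integrable lborel (einterval (-\<infinity>) \<infinity>) f"
   and eq: "(LBINT x=-\<infinity>..\<infinity>. f x) = B - A"
    using interval_integral_FTC_nonneg[of "-\<infinity>" "\<infinity>" F f A B] F f nonneg A B
    by (auto simp: ereal_tendsto_simps1)
  show "integrable lborel f" using int by (simp add: set_integrable_def)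
  moreover show "integral\<^sup>L lborel f = B - A" using eq
    by (simp add: interval_lebesgue_integral_def set_lebesgue_integral_def)
  ultimately show "(\<integral>\<^sup>+x. ennreal (f x) \<partial>lborel) = ennreal (B - A)"
    using nn_integral_eq_integral[of lborel f] nonneg by simp
qed

definition cauchy_pdf :: "real \<Rightarrow> real \<Rightarrow> real" where
  "cauchy_pdf s x = s / (pi * (s\<^sup>2 + x\<^sup>2))"

lemma cauchy_density_eq_cauchy_pdf: "cauchy_density = cauchy_pdf 1"
  by (auto simp: cauchy_density_def cauchy_pdf_def fun_eq_iff)

lemma cauchy_pdf_measurable [measurable]: "cauchy_pdf s \<in> borel_measurable borel"
  unfolding cauchy_pdf_def by measurable

lemma cauchy_pdf_nonneg: "0 \<le> s \<Longrightarrow> 0 \<le> cauchy_pdf s x"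
  unfolding cauchy_pdf_def by (simp add: add_nonneg_nonneg)

lemma atan_ratio_measurable [measurable]: "atan_ratio c a \<in> borel_measurable borel"
  unfolding atan_ratio_def by measurable

lemma sets_cauchy_measure [measurable_cong, simp]: "sets cauchy_measure = sets borel"
  by (simp add: cauchy_measure_def)

lemma AE_cauchy_measure_neq: "AE R in cauchy_measure. R \<noteq> v"
  unfolding cauchy_measure_def
  using AE_lborel_singleton[of v]
  by (subst AE_density) (auto elim: AE_mp simp: cauchy_density_eq_cauchy_pdf)

lemma isCont_cauchy_pdf: "0 < s \<Longrightarrow> isCont (cauchy_pdf s) x"
  unfolding cauchy_pdf_def by (intro continuous_intros) (simp add: add_pos_nonneg)

lemma DERIV_arctan_cauchy_pdf: "0 < s \<Longrightarrow> DERIV (\<lambda>x. arctan (x / s) / pi) x :> cauchy_pdf s x"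
  by (rule derivative_eq_intros refl | force)+
     (simp add: cauchy_pdf_def divide_simps power2_eq_square add_pos_pos)

lemma integral_cauchy_pdf:
  assumes "0 < s"
  shows "integrable lborel (cauchy_pdf s)" "integral\<^sup>L lborel (cauchy_pdf s) = 1"
proof -
  have "((\<lambda>x. arctan (x / s) / pi) \<longlongrightarrow> -1/2) at_bot"
       "((\<lambda>x. arctan (x / s) / pi) \<longlongrightarrow> 1/2) at_top"
    using assms by real_asymp+
  note FTC = lborel_integral_FTC_nonneg[OF DERIV_arctan_cauchy_pdf isCont_cauchy_pdf
      cauchy_pdf_nonneg this]
  show "integrable lborel (cauchy_pdf s)" "integral\<^sup>L lborel (cauchy_pdf s) = 1"
    using FTC(1,2) assms by simp_all
qed

lemma integral_cauchy_pdf_greaterThan: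
  assumes "0 < s"
  shows "(\<integral>x. indicator {w<..} x * cauchy_pdf s x \<partial>lborel) = 1/2 - arctan (w / s) / pi"
proof -
  have "(((\<lambda>x. arctan (x / s) / pi) \<circ> real_of_ereal) \<longlongrightarrow> arctan (w / s) / pi) (at_right (ereal w))"
    unfolding ereal_tendsto_simps1 using assms by (intro tendsto_intros) auto
  moreover have "(((\<lambda>x. arctan (x / s) / pi) \<circ> real_of_ereal) \<longlongrightarrow> 1/2) (at_left \<infinity>)"
    unfolding ereal_tendsto_simps1 using assms by real_asymp
  ultimately have "(LBINT x=ereal w..\<infinity>. cauchy_pdf s x) = 1/2 - arctan (w / s) / pi"
    using assms
    by (intro interval_integral_FTC_nonneg(2))
       (auto intro!: DERIV_arctan_cauchy_pdf isCont_cauchy_pdf cauchy_pdf_nonneg)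
  then show ?thesis
    by (simp add: interval_lebesgue_integral_def set_lebesgue_integral_def)
qed

lemma integral_sgn_shift_cauchy:
  assumes "0 < s"
  shows "(\<integral>x. sgn (x + z) \<partial>density lborel (\<lambda>x. ennreal (cauchy_pdf s x))) = 2 / pi * arctan (z / s)"
proof -
  have int: "integrable lborel (\<lambda>x. indicator {-z<..} x * cauchy_pdf s x)"
    using integrable_mult_indicator[of "{-z<..}" lborel "cauchy_pdf s"] integral_cauchy_pdf[OF assms]
    by simp
  have "(\<integral>x. sgn (x + z) \<partial>density lborel (\<lambda>x. ennreal (cauchy_pdf s x)))
      = (\<integral>x. cauchy_pdf s x * sgn (x + z) \<partial>lborel)"
    using assms by (subst integral_density) (auto simp: cauchy_pdf_nonneg)
  also have "\<dots> = (\<integral>x. 2 * (indicator {-z<..} x * cauchy_pdf s x) - cauchy_pdf s x \<partial>lborel)"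
    using AE_lborel_singleton[of "-z"]
    by (intro integral_cong_AE) (auto elim!: AE_mp simp: indicator_def sgn_if)
  also have "\<dots> = 2 * (1/2 - arctan (-z / s) / pi) - 1"
    using int integral_cauchy_pdf[OF assms] integral_cauchy_pdf_greaterThan[OF assms] by simp
  also have "\<dots> = 2 / pi * arctan (z / s)"
    by (simp add: arctan_minus field_simps)
  finally show ?thesis .
qed

lemma integral_cauchy_pdf_rescale:
  fixes h :: "real \<Rightarrow> real"
  assumes "0 < s" and [measurable]: "h \<in> borel_measurable borel"
  shows "(\<integral>z. h z \<partial>density lborel (\<lambda>x. ennreal (cauchy_pdf s x))) = (\<integral>R. h (s * R) \<partial>cauchy_measure)"
proof -
  have pdf: "s * cauchy_pdf s (s * x) = cauchy_density x" for x
  proof -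
    have "s\<^sup>2 + (s * x)\<^sup>2 = s\<^sup>2 * (1 + x\<^sup>2)"
      by (simp add: power_mult_distrib algebra_simps)
    then show ?thesis
      using assms(1) by (simp add: cauchy_pdf_def cauchy_density_def power2_eq_square)
  qed
  have "(\<integral>z. h z \<partial>density lborel (\<lambda>x. ennreal (cauchy_pdf s x))) = (\<integral>z. cauchy_pdf s z * h z \<partial>lborel)"
    using assms by (subst integral_density) (auto simp: cauchy_pdf_nonneg)
  also have "\<dots> = (\<integral>x. s * cauchy_pdf s (s * x) * h (s * x) \<partial>lborel)"
    using lborel_integral_real_affine[of s "\<lambda>z. cauchy_pdf s z * h z" 0] assms
    by (simp add: mult.assoc)
  also have "\<dots> = (\<integral>x. cauchy_density x * h (s * x) \<partial>lborel)"
    by (simp only: pdf)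
  also have "\<dots> = (\<integral>R. h (s * R) \<partial>cauchy_measure)"
    unfolding cauchy_measure_def
    by (subst integral_density) (auto simp: cauchy_density_eq_cauchy_pdf cauchy_pdf_nonneg)
  finally show ?thesis .
qed

text \<open>The primitive comes from the partial fraction decomposition of the integrand; its
  logarithmic part vanishes at \<open>\<plusminus>\<infinity>\<close>.\<close>
lemma DERIV_inverse_quadratics_primitive:
  fixes x s t u :: real
  assumes s: "0 < s" and t: "0 < t" and nz: "0 < x\<^sup>2 + (s - t)\<^sup>2"
  defines "k \<equiv> 1 / ((x\<^sup>2 + (s + t)\<^sup>2) * (x\<^sup>2 + (s - t)\<^sup>2))"
  shows "((\<lambda>u. x * k * (ln (u\<^sup>2 + t\<^sup>2) - ln ((u - x)\<^sup>2 + s\<^sup>2))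
            + (x\<^sup>2 + s\<^sup>2 - t\<^sup>2) * k / t * arctan (u / t)
            + (x\<^sup>2 - s\<^sup>2 + t\<^sup>2) * k / s * arctan ((u - x) / s))
         has_real_derivative 1 / ((u\<^sup>2 + t\<^sup>2) * ((u - x)\<^sup>2 + s\<^sup>2))) (at u)"
proof -
  have pos: "0 < u\<^sup>2 + t\<^sup>2" "0 < (u - x)\<^sup>2 + s\<^sup>2" "0 < x\<^sup>2 + (s + t)\<^sup>2"
    using s t by (simp_all add: add_nonneg_pos)
  note nonzero = pos[THEN less_imp_neq, symmetric] nz[THEN less_imp_neq, symmetric]
  show ?thesis
    by (rule derivative_eq_intros refl | use s t pos in force)+
       (use nonzero s t in \<open>simp add: k_def divide_simps del: sum_power2_eq_zero_iff;
          simp add: power2_eq_square; algebra\<close>)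
qed

lemma nn_integral_inverse_quadratics:
  fixes x s t :: real
  assumes s: "0 < s" and t: "0 < t" and nz: "0 < x\<^sup>2 + (s - t)\<^sup>2"
  shows "(\<integral>\<^sup>+u. ennreal (1 / ((u\<^sup>2 + t\<^sup>2) * ((u - x)\<^sup>2 + s\<^sup>2))) \<partial>lborel)
       = ennreal (pi * (s + t) / (s * t * ((s + t)\<^sup>2 + x\<^sup>2)))"
proof -
  define k where "k = 1 / ((x\<^sup>2 + (s + t)\<^sup>2) * (x\<^sup>2 + (s - t)\<^sup>2))"
  define F where "F = (\<lambda>u. x * k * (ln (u\<^sup>2 + t\<^sup>2) - ln ((u - x)\<^sup>2 + s\<^sup>2))
            + (x\<^sup>2 + s\<^sup>2 - t\<^sup>2) * k / t * arctan (u / t)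
            + (x\<^sup>2 - s\<^sup>2 + t\<^sup>2) * k / s * arctan ((u - x) / s))"
  define L where "L = pi / 2 * ((x\<^sup>2 + s\<^sup>2 - t\<^sup>2) * k / t + (x\<^sup>2 - s\<^sup>2 + t\<^sup>2) * k / s)"
  have pos: "0 < u\<^sup>2 + t\<^sup>2" "0 < (u - x)\<^sup>2 + s\<^sup>2" for u
    using s t by (simp_all add: add_nonneg_pos)
  have "(\<integral>\<^sup>+u. ennreal (1 / ((u\<^sup>2 + t\<^sup>2) * ((u - x)\<^sup>2 + s\<^sup>2))) \<partial>lborel) = ennreal (L - -L)"
  proof (rule lborel_integral_FTC_nonneg(3))
    show "DERIV F u :> 1 / ((u\<^sup>2 + t\<^sup>2) * ((u - x)\<^sup>2 + s\<^sup>2))" for u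
      unfolding F_def k_def by (rule DERIV_inverse_quadratics_primitive[OF s t nz])
    show "isCont (\<lambda>u. 1 / ((u\<^sup>2 + t\<^sup>2) * ((u - x)\<^sup>2 + s\<^sup>2))) u" for u
      using pos by (intro continuous_intros) (metis mult_pos_pos less_irrefl)
    show "0 \<le> 1 / ((u\<^sup>2 + t\<^sup>2) * ((u - x)\<^sup>2 + s\<^sup>2))" for u
      using pos[of u] by simp
    show "(F \<longlongrightarrow> -L) at_bot" "(F \<longlongrightarrow> L) at_top"
      unfolding F_def L_def using s t by (real_asymp; simp add: field_simps)+
  qed
  also have "L - -L = pi * ((x\<^sup>2 + s\<^sup>2 - t\<^sup>2) * s + (x\<^sup>2 - s\<^sup>2 + t\<^sup>2) * t) * k / (s * t)"
    unfolding L_def using s t by (simp add: field_simps)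
  also have "(x\<^sup>2 + s\<^sup>2 - t\<^sup>2) * s + (x\<^sup>2 - s\<^sup>2 + t\<^sup>2) * t = (s + t) * (x\<^sup>2 + (s - t)\<^sup>2)"
    by (simp add: power2_eq_square algebra_simps)
  also have "pi * ((s + t) * (x\<^sup>2 + (s - t)\<^sup>2)) * k / (s * t) = pi * (s + t) / (s * t * ((s + t)\<^sup>2 + x\<^sup>2))"
    using less_imp_neq[OF nz, symmetric] unfolding k_def
    by (simp add: add.commute[of "x\<^sup>2"] del: sum_power2_eq_zero_iff)
  finally show ?thesis .
qed

lemma cauchy_pdf_convolution:
  fixes x s t :: real
  assumes s: "0 < s" and t: "0 < t" and nz: "0 < x\<^sup>2 + (s - t)\<^sup>2"
  shows "(\<integral>\<^sup>+y. ennreal (cauchy_pdf s (x - y)) * ennreal (cauchy_pdf t y) \<partial>lborel)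
       = ennreal (cauchy_pdf (s + t) x)"
proof -
  define c where "c = s * t / pi\<^sup>2"
  have c: "0 < c" using s t by (simp add: c_def)
  have "ennreal (cauchy_pdf s (x - y)) * ennreal (cauchy_pdf t y)
      = ennreal c * ennreal (1 / ((y\<^sup>2 + t\<^sup>2) * ((y - x)\<^sup>2 + s\<^sup>2)))" for y
  proof -
    have "cauchy_pdf s (x - y) * cauchy_pdf t y = c * (1 / ((y\<^sup>2 + t\<^sup>2) * ((y - x)\<^sup>2 + s\<^sup>2)))"
      unfolding cauchy_pdf_def c_def by (simp add: power2_eq_square field_simps)
    then show ?thesis
      using s t c by (simp add: cauchy_pdf_nonneg add_nonneg_nonneg flip: ennreal_mult)
  qed
  then have "(\<integral>\<^sup>+y. ennreal (cauchy_pdf s (x - y)) * ennreal (cauchy_pdf t y) \<partial>lborel)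
      = ennreal c * ennreal (pi * (s + t) / (s * t * ((s + t)\<^sup>2 + x\<^sup>2)))"
    by (simp add: nn_integral_cmult nn_integral_inverse_quadratics[OF s t nz])
  also have "\<dots> = ennreal (cauchy_pdf (s + t) x)"
  proof -
    define q where "q = (s + t)\<^sup>2 + x\<^sup>2"
    have "0 < q" using s t by (simp add: q_def add_pos_nonneg)
    then have "c * (pi * (s + t) / (s * t * q)) = (s + t) / (pi * q)"
      using s t unfolding c_def by (simp add: power2_eq_square field_simps)
    then show ?thesis
      using s t c \<open>0 < q\<close> by (simp add: cauchy_pdf_def q_def flip: ennreal_mult)
  qed
  finally show ?thesis .
qed

lemma (in prob_space) indep_var_sums:
  fixes r :: "'i \<Rightarrow> 'a \<Rightarrow> real"
  assumes ind: "indep_vars (\<lambda>_. borel) r J" and "A \<inter> B = {}" "A \<subseteq> J" "B \<subseteq> J"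
  shows "indep_var borel (\<lambda>\<omega>. \<Sum>i\<in>A. r i \<omega>) borel (\<lambda>\<omega>. \<Sum>i\<in>B. r i \<omega>)"
proof -
  have "indep_var
      borel ((\<lambda>f. \<Sum>i\<in>A. f i) \<circ> (\<lambda>\<omega>. restrict (\<lambda>i. r i \<omega>) A))
      borel ((\<lambda>f. \<Sum>i\<in>B. f i) \<circ> (\<lambda>\<omega>. restrict (\<lambda>i. r i \<omega>) B))"
    using assms(2-) by (intro indep_var_compose[OF indep_var_restrict[OF ind]]) auto
  then show ?thesis
    by (simp add: comp_def cong: sum.cong)
qed

text \<open>Both arguments of \<open>indep_var\<close> must have the same type, so the
  single sum over \<open>C\<close> is duplicated into a pair.\<close>
lemma (in prob_space) indep_var_sum_pair_sums:
  fixes r :: "'i \<Rightarrow> 'a \<Rightarrow> real"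
  assumes ind: "indep_vars (\<lambda>_. borel) r J"
    and "C \<inter> (A \<union> B) = {}" "A \<subseteq> J" "B \<subseteq> J" "C \<subseteq> J"
  shows "indep_var (borel \<Otimes>\<^sub>M borel) (\<lambda>\<omega>. (\<Sum>i\<in>C. r i \<omega>, \<Sum>i\<in>C. r i \<omega>))
           (borel \<Otimes>\<^sub>M borel) (\<lambda>\<omega>. (\<Sum>i\<in>A. r i \<omega>, \<Sum>i\<in>B. r i \<omega>))"
proof -
  have sum_measurable: "(\<lambda>f. \<Sum>i\<in>S. f i) \<in> borel_measurable (Pi\<^sub>M T (\<lambda>_. borel :: real measure))"
    if "S \<subseteq> T" for S T :: "'i set"
  proof -
    have "(\<lambda>f. \<Sum>i\<in>S. (\<lambda>i f. f i) i f) \<in> borel_measurable (Pi\<^sub>M T (\<lambda>_. borel :: real measure))"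
      using that by (intro borel_measurable_sum measurable_component_singleton) auto
    then show ?thesis by simp
  qed
  have "indep_var
      (borel \<Otimes>\<^sub>M borel) ((\<lambda>f. (\<Sum>i\<in>C. f i, \<Sum>i\<in>C. f i)) \<circ> (\<lambda>\<omega>. restrict (\<lambda>i. r i \<omega>) C))
      (borel \<Otimes>\<^sub>M borel) ((\<lambda>f. (\<Sum>i\<in>A. f i, \<Sum>i\<in>B. f i)) \<circ> (\<lambda>\<omega>. restrict (\<lambda>i. r i \<omega>) (A \<union> B)))"
    using assms(2-)
    by (intro indep_var_compose[OF indep_var_restrict[OF ind]] measurable_Pair sum_measurable) auto
  then show ?thesis
    by (simp add: comp_def cong: sum.cong)
qed

lemma (in prob_space) distributed_sum_cauchy:
  fixes r :: "'i \<Rightarrow> 'a \<Rightarrow> real"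
  assumes ind: "indep_vars (\<lambda>_. borel) r J"
    and dist: "\<forall>i\<in>J. distributed M lborel (r i) (\<lambda>t. ennreal (cauchy_density t))"
    and "finite I" "I \<noteq> {}" "I \<subseteq> J"
  shows "distributed M lborel (\<lambda>\<omega>. \<Sum>i\<in>I. r i \<omega>) (\<lambda>x. ennreal (cauchy_pdf (card I) x))"
  using assms(3-)
proof (induction I rule: finite_ne_induct)
  case (singleton i)
  then show ?case
    using dist by (simp add: cauchy_density_eq_cauchy_pdf)
next
  case (insert i I)
  have ri: "distributed M lborel (r i) (\<lambda>x. ennreal (cauchy_pdf 1 x))"
    using dist insert by (simp add: cauchy_density_eq_cauchy_pdf)
  have "indep_var borel (\<lambda>\<omega>. \<Sum>i\<in>I. r i \<omega>) borel (\<lambda>\<omega>. \<Sum>i\<in>{i}. r i \<omega>)"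
    using insert by (intro indep_var_sums[OF ind]) auto
  then have conv: "distributed M lborel (\<lambda>\<omega>. (\<Sum>i\<in>I. r i \<omega>) + r i \<omega>)
      (\<lambda>x. \<integral>\<^sup>+y. ennreal (cauchy_pdf (card I) (x - y)) * ennreal (cauchy_pdf 1 y) \<partial>lborel)"
    using distributed_convolution[OF _ _ ri] insert by simp
  have card: "1 \<le> card I"
    using insert by (simp add: Suc_leI card_gt_0_iff)
  have "AE x in lborel. (\<integral>\<^sup>+y. ennreal (cauchy_pdf (card I) (x - y)) * ennreal (cauchy_pdf 1 y) \<partial>lborel)
      = ennreal (cauchy_pdf (real (card I) + 1) x)"
    using AE_lborel_singleton[of 0]
    by eventually_elim (use card in \<open>simp add: cauchy_pdf_convolution add_pos_nonneg\<close>)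
  with conv have "distributed M lborel (\<lambda>\<omega>. (\<Sum>i\<in>I. r i \<omega>) + r i \<omega>)
      (\<lambda>x. ennreal (cauchy_pdf (real (card I) + 1) x))"
    by (subst (asm) distributed_cong_density) auto
  moreover have "(\<lambda>\<omega>. \<Sum>i\<in>insert i I. r i \<omega>) = (\<lambda>\<omega>. (\<Sum>i\<in>I. r i \<omega>) + r i \<omega>)"
    and "real (card (insert i I)) = real (card I) + 1"
    using insert by (simp_all add: add.commute)
  ultimately show ?case
    by simp
qed

lemma (in prob_space) distr_sum_cauchy:
  fixes r :: "'i \<Rightarrow> 'a \<Rightarrow> real"
  assumes "indep_vars (\<lambda>_. borel) r J"
    and "\<forall>i\<in>J. distributed M lborel (r i) (\<lambda>t. ennreal (cauchy_density t))"
    and "finite I" "I \<noteq> {}" "I \<subseteq> J"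
  shows "distr M borel (\<lambda>\<omega>. \<Sum>i\<in>I. r i \<omega>) = density lborel (\<lambda>x. ennreal (cauchy_pdf (card I) x))"
  using distributed_sum_cauchy[OF assms]
  by (simp add: distributed_distr_eq_density[symmetric] cong: distr_cong)

lemma (in prob_space) AE_distributed_neq:
  assumes "distributed M lborel X f"
  shows "AE \<omega> in M. X \<omega> \<noteq> v"
proof -
  have "AE x in density lborel f. x \<noteq> v"
    using AE_lborel_singleton[of v] distributed_borel_measurable[OF assms]
    by (subst AE_density) (auto elim: AE_mp)
  then have "AE x in distr M lborel X. x \<noteq> v"
    by (simp only: distributed_distr_eq_density[OF assms])
  then show ?thesis
    using distributed_measurable[OF assms] by (subst (asm) AE_distr_iff) auto
qed

definition cauchy_sgn_mean :: "nat \<Rightarrow> real \<Rightarrow> real" where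
  "cauchy_sgn_mean n z = (if n = 0 then sgn z else 2 / pi * arctan (z / n))"

lemma (in prob_space) integral_sgn_shift_sum_cauchy:
  fixes r :: "'i \<Rightarrow> 'a \<Rightarrow> real"
  assumes ind: "indep_vars (\<lambda>_. borel) r J"
    and dist: "\<forall>i\<in>J. distributed M lborel (r i) (\<lambda>t. ennreal (cauchy_density t))"
    and "finite S" "S \<subseteq> J"
  shows "(\<integral>p. sgn (p + z) \<partial>distr M borel (\<lambda>\<omega>. \<Sum>i\<in>S. r i \<omega>)) = cauchy_sgn_mean (card S) z"
proof (cases "S = {}")
  case True
  then show ?thesis by (simp add: cauchy_sgn_mean_def integral_return)
next
  case False
  then show ?thesis
    using distr_sum_cauchy[OF ind dist assms(3) False assms(4)] assms(3)
    by (simp add: integral_sgn_shift_cauchy cauchy_sgn_mean_def card_gt_0_iff)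
qed

lemma (in prob_space) prob_sgn_neq:
  fixes X Y :: "'a \<Rightarrow> real"
  assumes [measurable]: "X \<in> borel_measurable M" "Y \<in> borel_measurable M"
    and "AE \<omega> in M. X \<omega> \<noteq> 0" "AE \<omega> in M. Y \<omega> \<noteq> 0"
  shows "prob {\<omega> \<in> space M. sgn (X \<omega>) \<noteq> sgn (Y \<omega>)}
       = 1/2 - 1/2 * expectation (\<lambda>\<omega>. sgn (X \<omega>) * sgn (Y \<omega>))"
proof -
  define E where "E = {\<omega> \<in> space M. sgn (X \<omega>) \<noteq> sgn (Y \<omega>)}"
  have [measurable]: "E \<in> events"
    unfolding E_def by measurable
  have "integrable M (\<lambda>\<omega>. sgn (X \<omega>) * sgn (Y \<omega>))"
    by (rule integrable_const_bound[where B=1]) (auto simp: sgn_if)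
  moreover have "expectation (indicator E) = expectation (\<lambda>\<omega>. 1/2 - 1/2 * (sgn (X \<omega>) * sgn (Y \<omega>)))"
    using assms(3,4) AE_space[of M]
  proof (intro integral_cong_AE, measurable, eventually_elim)
    case (elim \<omega>)
    then show ?case
      by (cases "X \<omega> > 0"; cases "Y \<omega> > 0") (auto simp: E_def indicator_def sgn_if)
  qed
  ultimately show ?thesis
    using sets.sets_into_space[OF \<open>E \<in> events\<close>] by (simp add: E_def prob_space Int_absorb2)
qed

lemma (in prob_space) expectation_indep_var_iterated:
  fixes f :: "'b \<times> 'b \<Rightarrow> real"
  assumes ind: "indep_var S X T Y"
    and [measurable]: "f \<in> borel_measurable (S \<Otimes>\<^sub>M T)"
    and bounded: "\<And>p. \<bar>f p\<bar> \<le> B"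
  shows "expectation (\<lambda>\<omega>. f (X \<omega>, Y \<omega>)) = (\<integral>x. (\<integral>y. f (x, y) \<partial>distr M T Y) \<partial>distr M S X)"
proof -
  note [measurable] = indep_var_rv1[OF ind] indep_var_rv2[OF ind]
  interpret PX: prob_space "distr M S X" by (rule prob_space_distr) measurable
  interpret PY: prob_space "distr M T Y" by (rule prob_space_distr) measurable
  interpret PXY: pair_prob_space "distr M S X" "distr M T Y" ..
  have sets: "sets (distr M S X \<Otimes>\<^sub>M distr M T Y) = sets (S \<Otimes>\<^sub>M T)"
    by (intro sets_pair_measure_cong) simp_all
  have "integrable (distr M S X \<Otimes>\<^sub>M distr M T Y) f"
    using bounded
    by (intro PXY.integrable_const_bound[where B=B]) (auto simp: measurable_cong_sets[OF sets refl])
  then have "(\<integral>x. (\<integral>y. f (x, y) \<partial>distr M T Y) \<partial>distr M S X) = integral\<^sup>L (distr M S X \<Otimes>\<^sub>M distr M T Y) f"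
    by (rule PXY.integral_fst')
  also have "\<dots> = integral\<^sup>L (distr M (S \<Otimes>\<^sub>M T) (\<lambda>\<omega>. (X \<omega>, Y \<omega>))) f"
    using ind by (simp add: indep_var_distribution_eq)
  also have "\<dots> = expectation (\<lambda>\<omega>. f (X \<omega>, Y \<omega>))"
    by (subst integral_distr) auto
  finally show ?thesis ..
qed

lemma (in prob_space) expectation_sgn_add_product:
  fixes X Y Z :: "'a \<Rightarrow> real"
  assumes XY: "indep_var borel X borel Y"
    and ZXY: "indep_var (borel \<Otimes>\<^sub>M borel) (\<lambda>\<omega>. (Z \<omega>, Z \<omega>)) (borel \<Otimes>\<^sub>M borel) (\<lambda>\<omega>. (X \<omega>, Y \<omega>))"
  shows "expectation (\<lambda>\<omega>. sgn (X \<omega> + Z \<omega>) * sgn (Y \<omega> + Z \<omega>))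
       = (\<integral>z. (\<integral>p. sgn (p + z) \<partial>distr M borel X) * (\<integral>q. sgn (q + z) \<partial>distr M borel Y) \<partial>distr M borel Z)"
proof -
  note [measurable] = indep_var_rv1[OF XY] indep_var_rv2[OF XY]
  have "(\<lambda>\<omega>. fst (Z \<omega>, Z \<omega>)) \<in> borel_measurable M"
    using indep_var_rv1[OF ZXY] by measurable
  then have [measurable]: "Z \<in> borel_measurable M"
    by simp
  define h where "h z = (\<integral>p. sgn (p + z) \<partial>distr M borel X) * (\<integral>q. sgn (q + z) \<partial>distr M borel Y)" for z
  interpret PX: prob_space "distr M borel X" by (rule prob_space_distr) measurable
  interpret PY: prob_space "distr M borel Y" by (rule prob_space_distr) measurable
  have [measurable]: "h \<in> borel_measurable borel"
    unfolding h_def by measurable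
  have inner: "(\<integral>w. sgn (fst w + z) * sgn (snd w + z) \<partial>distr M (borel \<Otimes>\<^sub>M borel) (\<lambda>\<omega>. (X \<omega>, Y \<omega>))) = h z"
    for z
  proof -
    have "(\<integral>w. sgn (fst w + z) * sgn (snd w + z) \<partial>distr M (borel \<Otimes>\<^sub>M borel) (\<lambda>\<omega>. (X \<omega>, Y \<omega>)))
        = expectation (\<lambda>\<omega>. sgn (X \<omega> + z) * sgn (Y \<omega> + z))"
      by (subst integral_distr) auto
    also have "\<dots> = h z"
      using expectation_indep_var_iterated[OF XY, of "\<lambda>w. sgn (fst w + z) * sgn (snd w + z)" 1]
      by (simp add: h_def abs_mult abs_sgn_eq)
    finally show ?thesis .
  qed
  have "expectation (\<lambda>\<omega>. sgn (X \<omega> + Z \<omega>) * sgn (Y \<omega> + Z \<omega>))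
      = (\<integral>v. h (fst v) \<partial>distr M (borel \<Otimes>\<^sub>M borel) (\<lambda>\<omega>. (Z \<omega>, Z \<omega>)))"
    using expectation_indep_var_iterated[OF ZXY,
        of "\<lambda>u. sgn (fst (snd u) + fst (fst u)) * sgn (snd (snd u) + fst (fst u))" 1]
    by (simp add: inner abs_mult abs_sgn_eq)
  also have "\<dots> = (\<integral>z. h z \<partial>distr M borel Z)"
    by (simp add: integral_distr)
  finally show ?thesis
    by (simp add: h_def)
qed

lemma cauchy_sgn_mean_scaled:
  assumes "0 < c" "R \<noteq> 0"
  shows "cauchy_sgn_mean a (c * R) = 2 / pi * sgn R * atan_ratio c a \<bar>R\<bar>"
  using assms
  by (cases "a = 0"; cases "R > 0")
     (auto simp: cauchy_sgn_mean_def atan_ratio_def sgn_mult arctan_minus)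

lemma integral_cauchy_sgn_mean_product:
  assumes "0 < c"
  shows "(\<integral>z. cauchy_sgn_mean a z * cauchy_sgn_mean b z \<partial>density lborel (\<lambda>x. ennreal (cauchy_pdf c x)))
       = 4 / pi\<^sup>2 * (\<integral>R. atan_ratio c a \<bar>R\<bar> * atan_ratio c b \<bar>R\<bar> \<partial>cauchy_measure)"
proof -
  have [measurable]: "cauchy_sgn_mean n \<in> borel_measurable borel" for n
    unfolding cauchy_sgn_mean_def by measurable
  have "(\<integral>z. cauchy_sgn_mean a z * cauchy_sgn_mean b z \<partial>density lborel (\<lambda>x. ennreal (cauchy_pdf c x)))
      = (\<integral>R. cauchy_sgn_mean a (c * R) * cauchy_sgn_mean b (c * R) \<partial>cauchy_measure)"
    using assms by (intro integral_cauchy_pdf_rescale) auto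
  also have "\<dots> = (\<integral>R. 4 / pi\<^sup>2 * (atan_ratio c a \<bar>R\<bar> * atan_ratio c b \<bar>R\<bar>) \<partial>cauchy_measure)"
    using AE_cauchy_measure_neq[of 0]
  proof (intro integral_cong_AE, measurable, eventually_elim)
    case (elim R)
    then have "sgn R * sgn R = 1"
      by (simp add: sgn_if)
    then show ?case
      using assms elim by (simp add: cauchy_sgn_mean_scaled power2_eq_square)
  qed
  finally show ?thesis
    by simp
qed

lemma (in prob_space) integral_cauchy_sgn_mean_product_sum:
  fixes r :: "'i \<Rightarrow> 'a \<Rightarrow> real"
  assumes ind: "indep_vars (\<lambda>_. borel) r J"
    and dist: "\<forall>i\<in>J. distributed M lborel (r i) (\<lambda>t. ennreal (cauchy_density t))"
    and "finite C" "C \<subseteq> J" "1 \<le> a + card C" "1 \<le> b + card C"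
  shows "(\<integral>z. cauchy_sgn_mean a z * cauchy_sgn_mean b z \<partial>distr M borel (\<lambda>\<omega>. \<Sum>i\<in>C. r i \<omega>))
       = 4 / pi\<^sup>2 * (\<integral>R. atan_ratio (card C) a \<bar>R\<bar> * atan_ratio (card C) b \<bar>R\<bar> \<partial>cauchy_measure)"
proof (cases "C = {}")
  case True
  then show ?thesis
    using assms(5,6) by (simp add: integral_return cauchy_sgn_mean_def atan_ratio_def)
next
  case False
  then show ?thesis
    using distr_sum_cauchy[OF ind dist assms(3) False assms(4)] assms(3)
    by (simp add: integral_cauchy_sgn_mean_product card_gt_0_iff)
qed

lemma (in prob_space) prob_sgn_neq_sums_cauchy:
  fixes r :: "'i \<Rightarrow> 'a \<Rightarrow> real"
  assumes ind: "indep_vars (\<lambda>_. borel) r J"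
    and dist: "\<forall>i\<in>J. distributed M lborel (r i) (\<lambda>t. ennreal (cauchy_density t))"
    and fin: "finite A" "finite B" "finite C" and sub: "A \<subseteq> J" "B \<subseteq> J" "C \<subseteq> J"
    and disj: "A \<inter> B = {}" "A \<inter> C = {}" "B \<inter> C = {}"
    and card: "1 \<le> card A + card C" "1 \<le> card B + card C"
  shows "prob {\<omega> \<in> space M. sgn (\<Sum>i\<in>A \<union> C. r i \<omega>) \<noteq> sgn (\<Sum>i\<in>B \<union> C. r i \<omega>)}
       = 1/2 - 2 / pi\<^sup>2 *
         (\<integral>R. atan_ratio (card C) (card A) \<bar>R\<bar> * atan_ratio (card C) (card B) \<bar>R\<bar> \<partial>cauchy_measure)"
proof -
  define X Y Z where "X \<omega> = (\<Sum>i\<in>A. r i \<omega>)" and "Y \<omega> = (\<Sum>i\<in>B. r i \<omega>)" and "Z \<omega> = (\<Sum>i\<in>C. r i \<omega>)"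
    for \<omega>
  have sums: "(\<Sum>i\<in>A \<union> C. r i \<omega>) = X \<omega> + Z \<omega>" "(\<Sum>i\<in>B \<union> C. r i \<omega>) = Y \<omega> + Z \<omega>" for \<omega>
    using fin disj by (simp_all add: X_def Y_def Z_def sum.union_disjoint)
  have nonzero: "AE \<omega> in M. (\<Sum>i\<in>S \<union> C. r i \<omega>) \<noteq> 0"
    if "finite S" "S \<subseteq> J" "S \<inter> C = {}" "1 \<le> card S + card C" for S
  proof (rule AE_distributed_neq)
    show "distributed M lborel (\<lambda>\<omega>. \<Sum>i\<in>S \<union> C. r i \<omega>) (\<lambda>x. ennreal (cauchy_pdf (card (S \<union> C)) x))"
      using that fin sub by (intro distributed_sum_cauchy[OF ind dist]) (auto simp: card_Un_disjoint)
  qed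
  have measurable: "(\<lambda>\<omega>. \<Sum>i\<in>S. r i \<omega>) \<in> borel_measurable M" if "S \<subseteq> J" for S
    using that ind by (intro borel_measurable_sum) (auto simp: indep_vars_def)
  have prob_eq: "prob {\<omega> \<in> space M. sgn (X \<omega> + Z \<omega>) \<noteq> sgn (Y \<omega> + Z \<omega>)}
      = 1/2 - 1/2 * expectation (\<lambda>\<omega>. sgn (X \<omega> + Z \<omega>) * sgn (Y \<omega> + Z \<omega>))"
    using measurable[of "A \<union> C"] measurable[of "B \<union> C"] nonzero[of A] nonzero[of B]
      fin sub disj card
    by (intro prob_sgn_neq) (simp_all add: sums)
  have "indep_var borel X borel Y"
    unfolding X_def Y_def using disj sub by (intro indep_var_sums[OF ind])
  moreover have "indep_var (borel \<Otimes>\<^sub>M borel) (\<lambda>\<omega>. (Z \<omega>, Z \<omega>)) (borel \<Otimes>\<^sub>M borel) (\<lambda>\<omega>. (X \<omega>, Y \<omega>))"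
    unfolding X_def Y_def Z_def using disj sub by (intro indep_var_sum_pair_sums[OF ind]) auto
  ultimately have "expectation (\<lambda>\<omega>. sgn (X \<omega> + Z \<omega>) * sgn (Y \<omega> + Z \<omega>))
      = (\<integral>z. cauchy_sgn_mean (card A) z * cauchy_sgn_mean (card B) z \<partial>distr M borel Z)"
    unfolding X_def Y_def
    by (simp add: expectation_sgn_add_product integral_sgn_shift_sum_cauchy[OF ind dist] fin sub)
  also have "\<dots> = 4 / pi\<^sup>2 *
      (\<integral>R. atan_ratio (card C) (card A) \<bar>R\<bar> * atan_ratio (card C) (card B) \<bar>R\<bar> \<partial>cauchy_measure)"
    unfolding Z_def using fin sub card by (intro integral_cauchy_sgn_mean_product_sum[OF ind dist])
  finally show ?thesis
    using prob_eq by (simp add: sums)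
qed

lemma sum_if_mem_mult:
  fixes f :: "'i \<Rightarrow> 'b::comm_semiring_1"
  assumes "finite A" "S \<subseteq> A"
  shows "(\<Sum>i\<in>A. (if i \<in> S then k else 0) * f i) = k * (\<Sum>i\<in>S. f i)"
proof -
  have "(\<Sum>i\<in>A. (if i \<in> S then k else 0) * f i) = (\<Sum>i\<in>A. if i \<in> S then k * f i else 0)"
    by (rule sum.cong) auto
  with assms show ?thesis
    by (simp add: sum.inter_restrict[symmetric] Int_absorb1 sum_distrib_left)
qed

theorem theorem2:
  fixes M :: "'w measure" and D a b c :: nat
    and Ia Ib Ic :: "nat set" and r :: "nat \<Rightarrow> 'w \<Rightarrow> real"
  assumes "prob_space M"
    and "a + c \<ge> 1" and "b + c \<ge> 1" and "a + b + c \<le> D"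
    and "Ia \<subseteq> {1..D}" and "Ib \<subseteq> {1..D}" and "Ic \<subseteq> {1..D}"
    and "Ia \<inter> Ib = {}" and "Ia \<inter> Ic = {}" and "Ib \<inter> Ic = {}"
    and "card Ia = a" and "card Ib = b" and "card Ic = c"
    and "prob_space.indep_vars M (\<lambda>_. borel) r {1..D}"
    and "\<forall>i\<in>{1..D}. distributed M lborel (r i) (\<lambda>t. ennreal (cauchy_density t))"
  shows "let u = (\<lambda>i. if i \<in> Ia \<union> Ic then 1 / real (a + c) else 0);
             v = (\<lambda>i. if i \<in> Ib \<union> Ic then 1 / real (b + c) else 0);
             x = (\<lambda>\<omega>. \<Sum>i\<in>{1..D}. u i * r i \<omega>);
             y = (\<lambda>\<omega>. \<Sum>i\<in>{1..D}. v i * r i \<omega>)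
         in measure M {\<omega> \<in> space M. sgn (x \<omega>) \<noteq> sgn (y \<omega>)}
            = 1 / 2 - 2 / pi\<^sup>2 *
              (\<integral>R. atan_ratio c a \<bar>R\<bar> * atan_ratio c b \<bar>R\<bar> \<partial>cauchy_measure)"
proof -
  interpret prob_space M by fact
  have fin: "finite Ia" "finite Ib" "finite Ic"
    using assms(5-7) by (auto intro: finite_subset)
  have weights: "(\<Sum>i\<in>{1..D}. (if i \<in> S then k else 0) * r i \<omega>) = k * (\<Sum>i\<in>S. r i \<omega>)"
    if "S \<subseteq> {1..D}" for S k \<omega>
    using that by (rule sum_if_mem_mult[OF finite_atLeastAtMost])
  have "measure M {\<omega> \<in> space M.
        sgn (\<Sum>i\<in>{1..D}. (if i \<in> Ia \<union> Ic then 1 / real (a + c) else 0) * r i \<omega>)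
      \<noteq> sgn (\<Sum>i\<in>{1..D}. (if i \<in> Ib \<union> Ic then 1 / real (b + c) else 0) * r i \<omega>)}
    = prob {\<omega> \<in> space M. sgn (\<Sum>i\<in>Ia \<union> Ic. r i \<omega>) \<noteq> sgn (\<Sum>i\<in>Ib \<union> Ic. r i \<omega>)}"
    unfolding weights[OF Un_least[OF assms(5,7)]] weights[OF Un_least[OF assms(6,7)]]
    using assms(2,3) by (simp add: sgn_mult)
  also have "\<dots> = 1 / 2 - 2 / pi\<^sup>2 *
      (\<integral>R. atan_ratio c a \<bar>R\<bar> * atan_ratio c b \<bar>R\<bar> \<partial>cauchy_measure)"
    using prob_sgn_neq_sums_cauchy[OF assms(14,15) fin assms(5-10)] assms(2,3,11-13) by simp
  finally show ?thesis
    by (simp only: Let_def)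
qed

end
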